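(* Let $X$ be a $T_1$ space and $\mathcal{P}$ an ideal of closed subsets of $X$ containing every singleton subset of $X$. The following are equivalent: (1) $C(X)=C(X)_\mathcal{P}$; (2) $X$ is discrete; (3) $C(X)_\mathcal{P}$ is a ring of quotients of $C(X)$.
   Context: An ideal of closed subsets of $X$ is a family $\mathcal{P}$ of closed subsets closed under finite unions and under passing to closed subsets. $D_f$ is the set of discontinuity points of $f\in\mathbb{R}^X$; $C(X)_\mathcal{P}=\{f\in\mathbb{R}^X\colon\overline{D_f}\in\mathcal{P}\}$; $C(X)$ is the ring of continuous real-valued functions on $X$. A ring $S$ containing a reduced ring $R$ is a ring of quotients of $R$ if for each $s\in S\setminus\{0\}$ there is $r\in R$ with $sr\in R\setminus\{0\}$. *)

theory Defs
  imports "HOL-Analysis.Analysis" "HOL-Library.FuncSet"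
begin

text \<open>Real-valued functions on X are represented extensionally: elements of
  the extensional function space PiE (topspace X) UNIV (value undefined outside the space).\<close>

definition ideal_closed :: "'a topology \<Rightarrow> 'a set set \<Rightarrow> bool" where
  "ideal_closed X P \<longleftrightarrow>
     (\<forall>A\<in>P. closedin X A) \<and> {} \<in> P \<and>
     (\<forall>A\<in>P. \<forall>B\<in>P. A \<union> B \<in> P) \<and>
     (\<forall>A\<in>P. \<forall>B. closedin X B \<and> B \<subseteq> A \<longrightarrow> B \<in> P)"

definition discont_points :: "'a topology \<Rightarrow> ('a \<Rightarrow> real) \<Rightarrow> 'a set" where
  "discont_points X f = {x \<in> topspace X. \<not> limitin euclideanreal f (f x) (atin X x)}"

definition Cont :: "'a topology \<Rightarrow> ('a \<Rightarrow> real) set" where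
  "Cont X = {f \<in> topspace X \<rightarrow>\<^sub>E UNIV. continuous_map X euclideanreal f}"

definition Cont_P :: "'a topology \<Rightarrow> 'a set set \<Rightarrow> ('a \<Rightarrow> real) set" where
  "Cont_P X P = {f \<in> topspace X \<rightarrow>\<^sub>E UNIV. X closure_of (discont_points X f) \<in> P}"

definition fmult :: "'a topology \<Rightarrow> ('a \<Rightarrow> real) \<Rightarrow> ('a \<Rightarrow> real) \<Rightarrow> ('a \<Rightarrow> real)" where
  "fmult X f g = (\<lambda>x\<in>topspace X. f x * g x)"

definition fzero :: "'a topology \<Rightarrow> ('a \<Rightarrow> real)" where
  "fzero X = (\<lambda>x\<in>topspace X. 0)"

definition ring_of_quotients :: "'a topology \<Rightarrow> ('a \<Rightarrow> real) set \<Rightarrow> ('a \<Rightarrow> real) set \<Rightarrow> bool" where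
  "ring_of_quotients X R S \<longleftrightarrow> R \<subseteq> S \<and>
     (\<forall>s\<in>S. s \<noteq> fzero X \<longrightarrow> (\<exists>r\<in>R. fmult X s r \<in> R \<and> fmult X s r \<noteq> fzero X))"

end

theory Submission
  imports Defs
begin

text \<open>For every point x the spike at x, equal to 1 at x and 0 elsewhere, has at most the
  discontinuity x in a T1 space, so it lies in C(X)_P; it is continuous only if {x} is open.
  Hence C(X) = C(X)_P forces X to be discrete. If C(X)_P is a ring of quotients of C(X), then
  some continuous g makes the product of g with the spike a nonzero continuous function; that
  product is the spike scaled by g(x) \<noteq> 0, so again {x} is open. Conversely, on a discrete
  space every function is continuous, so C(X) = C(X)_P, which is trivially a ring of
  quotients of itself.\<close>

definition spike :: "'a topology \<Rightarrow> 'a \<Rightarrow> real \<Rightarrow> ('a \<Rightarrow> real)" where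
  "spike X x c = (\<lambda>y\<in>topspace X. if y = x then c else 0)"

lemma spike_in_PiE [simp]: "spike X x c \<in> topspace X \<rightarrow>\<^sub>E UNIV"
  by (simp add: spike_def)

lemma spike_eq_fzero_iff:
  assumes "x \<in> topspace X"
  shows "spike X x c = fzero X \<longleftrightarrow> c = 0"
proof
  assume "spike X x c = fzero X"
  then have "spike X x c x = fzero X x" by simp
  then show "c = 0" using assms by (simp add: spike_def fzero_def)
qed (auto simp: spike_def fzero_def)

lemma fmult_spike: "fmult X (spike X x 1) g = spike X x (g x)"
  by (auto simp: fmult_def spike_def)

lemma continuous_map_iff_discont_points_empty:
  "continuous_map X euclideanreal f \<longleftrightarrow> discont_points X f = {}"
  unfolding continuous_map_atin discont_points_def by auto

lemma discont_points_spike_subset: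
  assumes "t1_space X"
  shows "discont_points X (spike X x c) \<subseteq> {x}"
proof
  fix y assume y: "y \<in> discont_points X (spike X x c)"
  then have y_in: "y \<in> topspace X" by (simp add: discont_points_def)
  show "y \<in> {x}"
  proof (rule ccontr)
    assume "y \<notin> {x}"
    have "\<forall>\<^sub>F z in atin X y. spike X x c z \<in> U" if "spike X x c y \<in> U" for U
    proof -
      have "openin X (topspace X - {x})"
        using closedin_t1_singleton[OF assms, of x]
        by (cases "x \<in> topspace X") (auto simp: closedin_def)
      moreover have "\<forall>z \<in> topspace X - {x}. spike X x c z \<in> U"
        using that \<open>y \<notin> {x}\<close> y_in by (simp add: spike_def)
      ultimately show ?thesis
        using \<open>y \<notin> {x}\<close> y_in unfolding eventually_atin by blast
    qed
    then have "limitin euclideanreal (spike X x c) (spike X x c y) (atin X y)"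
      by (simp add: limitin_def)
    then show False using y by (simp add: discont_points_def)
  qed
qed

lemma ideal_closed_closure_of_subset:
  assumes "ideal_closed X P" "A \<in> P" "B \<subseteq> A"
  shows "X closure_of B \<in> P"
proof -
  have "closedin X A" using assms(1,2) by (simp add: ideal_closed_def)
  then have "X closure_of B \<subseteq> A"
    using assms(3) by (simp add: closure_of_minimal)
  moreover have "closedin X (X closure_of B)" by simp
  ultimately show ?thesis using assms(1,2) unfolding ideal_closed_def by blast
qed

lemma spike_in_Cont_P:
  assumes "t1_space X" "ideal_closed X P" "{x} \<in> P"
  shows "spike X x c \<in> Cont_P X P"
  using ideal_closed_closure_of_subset[OF assms(2,3) discont_points_spike_subset[OF assms(1)]]
  by (simp add: Cont_P_def)

lemma openin_singleton_if_spike_continuous: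
  assumes "continuous_map X euclideanreal (spike X x c)" "c \<noteq> 0" "x \<in> topspace X"
  shows "openin X {x}"
proof -
  have "openin X {y \<in> topspace X. spike X x c y \<noteq> 0}"
    using openin_continuous_map_preimage[OF assms(1), of "-{0}"] by (simp add: open_Compl)
  also have "{y \<in> topspace X. spike X x c y \<noteq> 0} = {x}"
    using assms(2,3) by (auto simp: spike_def)
  finally show ?thesis .
qed

lemma discrete_if_spikes_continuous:
  assumes "\<And>x. x \<in> topspace X \<Longrightarrow> \<exists>c. c \<noteq> 0 \<and> spike X x c \<in> Cont X"
  shows "X = discrete_topology (topspace X)"
proof -
  have "openin X {x}" if "x \<in> topspace X" for x
    using assms[OF that] openin_singleton_if_spike_continuous that
    by (auto simp: Cont_def)
  then show ?thesis by (metis discrete_topology_unique)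
qed

lemma Cont_eq_Cont_P_if_discrete:
  assumes "X = discrete_topology (topspace X)" "{} \<in> P"
  shows "Cont X = Cont_P X P"
proof -
  have continuous: "continuous_map X euclideanreal f" for f
    by (subst assms(1)) simp
  then have "discont_points X f = {}" for f
    by (simp add: continuous_map_iff_discont_points_empty)
  then show ?thesis
    using assms(2) continuous by (simp add: Cont_def Cont_P_def)
qed

lemma ring_of_quotients_self:
  assumes "R \<subseteq> topspace X \<rightarrow>\<^sub>E UNIV" and one: "(\<lambda>y\<in>topspace X. 1) \<in> R"
  shows "ring_of_quotients X R R"
  unfolding ring_of_quotients_def
proof (intro conjI subset_refl ballI impI)
  fix s assume "s \<in> R" "s \<noteq> fzero X"
  then have s: "s \<in> topspace X \<rightarrow>\<^sub>E UNIV" using assms(1) by blast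
  have "fmult X s (\<lambda>y\<in>topspace X. 1) = s"
  proof
    fix y show "fmult X s (\<lambda>y\<in>topspace X. 1) y = s y"
      using PiE_arb[OF s, of y] by (simp add: fmult_def)
  qed
  then show "\<exists>r\<in>R. fmult X s r \<in> R \<and> fmult X s r \<noteq> fzero X"
    using one \<open>s \<in> R\<close> \<open>s \<noteq> fzero X\<close>
    by (intro bexI[of _ "\<lambda>y\<in>topspace X. 1"]) simp_all
qed

lemma spike_continuous_if_ring_of_quotients:
  assumes "ring_of_quotients X (Cont X) S" "spike X x 1 \<in> S" "x \<in> topspace X"
  shows "\<exists>c. c \<noteq> 0 \<and> spike X x c \<in> Cont X"
proof -
  have "spike X x 1 \<noteq> fzero X"
    using assms(3) by (simp add: spike_eq_fzero_iff)
  then obtain g where "fmult X (spike X x 1) g \<in> Cont X" "fmult X (spike X x 1) g \<noteq> fzero X"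
    using assms(1,2) unfolding ring_of_quotients_def by blast
  then have "spike X x (g x) \<in> Cont X" "g x \<noteq> 0"
    using assms(3) by (simp_all add: fmult_spike spike_eq_fzero_iff)
  then show ?thesis by blast
qed

theorem proposition5p4:
  fixes X :: "'a topology" and P :: "'a set set"
  assumes "t1_space X"
    and "ideal_closed X P"
    and "\<forall>x\<in>topspace X. {x} \<in> P"
  shows "(Cont X = Cont_P X P \<longleftrightarrow> X = discrete_topology (topspace X))
       \<and> (X = discrete_topology (topspace X) \<longleftrightarrow> ring_of_quotients X (Cont X) (Cont_P X P))"
proof -
  have spikes: "spike X x 1 \<in> Cont_P X P" if "x \<in> topspace X" for x
    using spike_in_Cont_P[OF assms(1,2)] assms(3) that by blast
  have eq_if_discrete: "Cont X = Cont_P X P" if "X = discrete_topology (topspace X)"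
    using Cont_eq_Cont_P_if_discrete[OF that] assms(2) by (simp add: ideal_closed_def)
  have discrete_if_eq: "X = discrete_topology (topspace X)" if "Cont X = Cont_P X P"
  proof (rule discrete_if_spikes_continuous)
    show "\<exists>c. c \<noteq> 0 \<and> spike X x c \<in> Cont X" if "x \<in> topspace X" for x
      using spikes[OF that] \<open>Cont X = Cont_P X P\<close> by (intro exI[of _ 1]) simp
  qed
  have discrete_if_quotients: "X = discrete_topology (topspace X)"
    if "ring_of_quotients X (Cont X) (Cont_P X P)"
  proof (rule discrete_if_spikes_continuous)
    show "\<exists>c. c \<noteq> 0 \<and> spike X x c \<in> Cont X" if "x \<in> topspace X" for x
      using spike_continuous_if_ring_of_quotients[OF _ spikes[OF that] that]
        \<open>ring_of_quotients X (Cont X) (Cont_P X P)\<close> .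
  qed
  have "ring_of_quotients X (Cont X) (Cont X)"
    by (rule ring_of_quotients_self) (auto simp: Cont_def)
  then show ?thesis
    using eq_if_discrete discrete_if_eq discrete_if_quotients by metis
qed

end
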